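(* There exist absolute constants $0<c\le C$ such that for all integers $1\le m\le n$, $$n!\left(\frac{c}{m}\max\Big\{1,\log\frac nm\Big\}\right)^m\le|s(n+1,m+1)|\le n!\left(\frac{C}{m}\max\Big\{1,\log\frac nm\Big\}\right)^m.$$
   Context: $s(a,b)$ denote the Stirling numbers of the first kind, defined by $x(x-1)\cdots(x-a+1)=\sum_{b=1}^{a}s(a,b)x^b$. Logarithms are natural. *)

theory Defs
  imports "HOL-Analysis.Analysis" "HOL-Combinatorics.Stirling"
begin

end

theory Submission
  imports Defs
begin

text \<open>
  Write \<open>|s(n+1,m+1)| = n! e\<^sub>m(1, 1/2, \<dots>, 1/n)\<close>, with \<open>e\<^sub>m\<close> the elementary symmetric
  function, and \<open>L = max 1 (ln (n/m))\<close>.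

  Upper bound: \<open>t(t+1)\<cdots>(t+n)\<close> is the generating polynomial of the row \<open>|s(n+1,\<cdot>)|\<close>, so
  \<open>|s(n+1,m+1)| \<le> (t+1)\<cdots>(t+n) / t\<^sup>m\<close> for every \<open>t > 0\<close>. If \<open>L \<le> m\<close>, take the integer
  \<open>t = \<lceil>m/L\<rceil>\<close>: then \<open>(t+1)\<cdots>(t+n) = n! binom(n+t,t) \<le> n! (e(n+t)/t)\<^sup>t\<close>. If \<open>L > m\<close>, take
  \<open>t = m/H\<^sub>n\<close> and use \<open>1 + t/k \<le> exp(t/k)\<close>, giving \<open>n! (e H\<^sub>n/m)\<^sup>m\<close> with \<open>H\<^sub>n \<le> 2L\<close>.

  Lower bound: split \<open>{1..qm}\<close>, \<open>q = n div m\<close>, into the \<open>m\<close> residue classes mod \<open>m\<close>. Choosing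
  one element from each class gives distinct monomials of \<open>e\<^sub>m\<close>, so \<open>e\<^sub>m\<close> is at least the
  product of the class sums of reciprocals, each of which is at least \<open>H\<^sub>q/m \<ge> L/m\<close>.
\<close>

section \<open>Upper bound\<close>

lemma stirling_le_pochhammer_div_power:
  fixes t :: real
  assumes "0 < t"
  shows "real (stirling (Suc n) (Suc m)) \<le> pochhammer (1 + t) n / t ^ m"
proof (cases "m \<le> n")
  case False
  then show ?thesis using assms by (simp add: pochhammer_nonneg)
next
  case True
  have "real (stirling (Suc n) (Suc m)) * t ^ Suc m
      \<le> (\<Sum>k\<le>Suc n. real (stirling (Suc n) k) * t ^ k)"
    using True assms by (intro member_le_sum[where f = "\<lambda>k. real (stirling (Suc n) k) * t ^ k"]) auto
  also have "\<dots> = pochhammer t (Suc n)"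
    by (rule stirling_pochhammer)
  also have "\<dots> = pochhammer (1 + t) n * t"
    by (simp add: pochhammer_rec add.commute)
  finally show ?thesis
    using assms by (simp del: stirling.simps add: field_simps)
qed

lemma pochhammer_le_fact_mult_exp_harm:
  fixes t :: real
  assumes "0 \<le> t"
  shows "pochhammer (1 + t) n \<le> fact n * exp (t * harm n)"
proof (induction n)
  case 0
  then show ?case by (simp add: harm_def)
next
  case (Suc n)
  have factor: "1 + t + real n \<le> real (Suc n) * exp (t / real (Suc n))"
  proof -
    have "1 + t + real n = real (Suc n) * (1 + t / real (Suc n))"
      by (simp add: field_simps)
    also have "\<dots> \<le> real (Suc n) * exp (t / real (Suc n))"
      by (intro mult_left_mono exp_ge_add_one_self) auto
    finally show ?thesis .
  qed
  have "pochhammer (1 + t) (Suc n) = pochhammer (1 + t) n * (1 + t + real n)"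
    by (rule pochhammer_Suc)
  also have "\<dots> \<le> (fact n * exp (t * harm n)) * (real (Suc n) * exp (t / real (Suc n)))"
    using Suc.IH factor assms by (intro mult_mono) (auto intro: pochhammer_nonneg)
  also have "\<dots> = fact (Suc n) * exp (t * harm (Suc n))"
    by (simp add: harm_Suc exp_add[symmetric] algebra_simps divide_inverse)
  finally show ?case .
qed

lemma pochhammer_one_plus_of_nat_eq_fact_mult_binomial:
  "pochhammer (1 + real s) n = fact n * real ((n + s) choose s)"
proof -
  have "(fact (s + n) :: real) = pochhammer 1 (s + n)"
    by (rule pochhammer_fact)
  also have "\<dots> = pochhammer 1 s * pochhammer (1 + real s) n"
    by (rule pochhammer_product')
  finally have "fact (s + n) = (fact s * pochhammer (1 + real s) n :: real)"
    by (simp add: pochhammer_fact)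
  moreover have "fact s * fact n * ((n + s) choose s) = (fact (n + s) :: nat)"
    using binomial_fact_lemma[of s "n + s"] by simp
  then have "fact s * fact n * real ((n + s) choose s) = (fact (s + n) :: real)"
    by (metis add.commute of_nat_fact of_nat_mult)
  ultimately show ?thesis by (simp add: mult.assoc)
qed

lemma power_div_fact_le_exp:
  fixes x :: real
  assumes "0 \<le> x"
  shows "x ^ n / fact n \<le> exp x"
proof -
  have "(\<Sum>k\<in>{n}. x ^ k / fact k) \<le> (\<Sum>k. x ^ k / fact k)"
    using exp_converges[of x] assms
    by (intro sum_le_suminf) (auto simp: sums_iff divide_inverse mult.commute)
  also have "\<dots> = exp x"
    using exp_converges[of x] by (simp add: sums_iff divide_inverse mult.commute)
  finally show ?thesis by simp
qed

lemma binomial_le_exp_mult_power: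
  assumes "0 < k"
  shows "real (n choose k) \<le> (exp 1 * real n / real k) ^ k"
proof -
  have "real (n choose k) * real k ^ k \<le> real (n choose k) * (exp (real k) * fact k)"
    using power_div_fact_le_exp[of "real k" k] by (intro mult_left_mono) (auto simp: divide_le_eq)
  also have "\<dots> = real ((n choose k) * fact k) * exp (real k)"
    by simp
  also have "\<dots> \<le> real (n ^ k) * exp (real k)"
    using binomial_fact_pow[of n k] by (intro mult_right_mono) (auto simp del: of_nat_mult)
  also have "\<dots> = (exp 1 * real n / real k) ^ k * real k ^ k"
    using assms by (simp add: power_divide power_mult_distrib flip: exp_of_nat_mult)
  finally show ?thesis
    by (rule mult_right_le_imp_le) (use assms in simp)
qed

lemma stirling_le_fact_mult_harm_power:
  assumes "1 \<le> m"
  shows "real (stirling (Suc n) (Suc m)) \<le> fact n * (exp 1 * harm n / real m) ^ m"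
proof (cases "n = 0")
  case True
  then show ?thesis using assms by (simp add: harm_def)
next
  case False
  define t where "t = real m / harm n"
  have harm_pos: "0 < (harm n :: real)" using False by simp
  have t_pos: "0 < t" unfolding t_def using assms harm_pos by simp
  have "real (stirling (Suc n) (Suc m)) \<le> pochhammer (1 + t) n / t ^ m"
    by (rule stirling_le_pochhammer_div_power[OF t_pos])
  also have "\<dots> \<le> fact n * exp (t * harm n) / t ^ m"
    using t_pos by (intro divide_right_mono pochhammer_le_fact_mult_exp_harm) auto
  also have "\<dots> = fact n * (exp 1 * harm n / real m) ^ m"
    unfolding t_def using harm_pos assms
    by (simp add: exp_of_nat_mult[symmetric] power_divide power_mult_distrib field_simps)
  finally show ?thesis .
qed

lemma stirling_le_fact_mult_binomial_div_power:
  assumes "0 < s"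
  shows "real (stirling (Suc n) (Suc m))
    \<le> fact n * (exp 1 * (real n + real s) / real s) ^ s / real s ^ m"
proof -
  have "real (stirling (Suc n) (Suc m)) \<le> pochhammer (1 + real s) n / real s ^ m"
    using assms by (intro stirling_le_pochhammer_div_power) auto
  also have "\<dots> = fact n * real ((n + s) choose s) / real s ^ m"
    by (simp add: pochhammer_one_plus_of_nat_eq_fact_mult_binomial)
  also have "\<dots> \<le> fact n * (exp 1 * (real n + real s) / real s) ^ s / real s ^ m"
    using binomial_le_exp_mult_power[OF assms, of "n + s"]
    by (intro divide_right_mono mult_left_mono) auto
  finally show ?thesis .
qed

lemma one_plus_le_exp_double:
  fixes x r L :: real
  assumes "x \<le> r * L" "1 \<le> r" "ln r \<le> L" "1 \<le> L"
  shows "1 + x \<le> exp (2 * L)"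
proof -
  have "r = exp (ln r)"
    using assms(2) by simp
  also have "\<dots> \<le> exp L"
    using assms(3) by simp
  finally have "r \<le> exp L" .
  have "1 \<le> r * L"
    using mult_mono[of 1 r 1 L] assms by simp
  have "r * L \<le> exp L * exp (L - 1)"
    using \<open>r \<le> exp L\<close> exp_ge_add_one_self[of "L - 1"] assms(4) by (intro mult_mono) auto
  have "1 + x \<le> r * L + r * L"
    using \<open>1 \<le> r * L\<close> assms(1) by (rule add_mono)
  also have "\<dots> \<le> exp L * exp (L - 1) + exp L * exp (L - 1)"
    using \<open>r * L \<le> exp L * exp (L - 1)\<close> by (intro add_mono)
  also have "\<dots> = 2 * (exp L * exp (L - 1))"
    by simp
  also have "\<dots> \<le> exp 1 * (exp L * exp (L - 1))"
    using exp_ge_add_one_self[of 1] by (intro mult_right_mono) auto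
  also have "\<dots> = exp (2 * L)"
    by (simp flip: exp_add)
  finally show ?thesis .
qed

lemma stirling_upper_bound_of_shift:
  assumes "1 \<le> m" "m \<le> n" "ln (real n / real m) \<le> L" "1 \<le> L" "L \<le> real m"
    and s_ge: "real m / L \<le> real s" and s_le: "real s \<le> real m / L + 1"
  shows "real (stirling (Suc n) (Suc m)) \<le> fact n * (exp 6 / real m * L) ^ m"
proof -
  have m_pos: "0 < real m" using assms by simp
  have "0 < real m / L" using m_pos assms(4) by simp
  then have s_real_pos: "0 < real s" using s_ge by linarith
  then have s_pos: "0 < s" by simp
  have base: "exp 1 * (real n + real s) / real s \<le> exp (2 * L + 1)"
  proof -
    have "real n / real s \<le> real n / (real m / L)"
      using s_ge s_real_pos \<open>0 < real m / L\<close> by (intro divide_left_mono mult_pos_pos) auto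
    then have "1 + real n / real s \<le> exp (2 * L)"
      by (intro one_plus_le_exp_double[where r = "real n / real m"]) (use assms in auto)
    moreover have "exp 1 * (real n + real s) / real s = exp 1 * (1 + real n / real s)"
      using s_pos by (simp add: field_simps)
    ultimately show ?thesis
      by (simp add: exp_add mult.commute)
  qed
  have s_times: "(2 * L + 1) * real s \<le> 6 * real m"
  proof -
    have "(2 * L + 1) * real s \<le> (2 * L + 1) * (real m / L + 1)"
      using s_le assms(4) by (intro mult_left_mono) auto
    also have "\<dots> = 2 * real m + 2 * L + real m / L + 1"
      using assms(4) by (simp add: field_simps)
    also have "real m / L \<le> real m"
      using assms(4) m_pos by (simp add: divide_le_eq)
    finally show ?thesis
      using assms(1,5) by simp
  qed
  have pow_s: "(exp 1 * (real n + real s) / real s) ^ s \<le> exp 6 ^ m"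
  proof -
    have "(exp 1 * (real n + real s) / real s) ^ s \<le> exp (2 * L + 1) ^ s"
      using base by (intro power_mono) auto
    also have "\<dots> = exp ((2 * L + 1) * real s)"
      by (simp add: mult.commute flip: exp_of_nat_mult)
    also have "\<dots> \<le> exp (6 * real m)"
      using s_times by simp
    also have "\<dots> = exp 6 ^ m"
      by (simp add: mult.commute flip: exp_of_nat_mult)
    finally show ?thesis .
  qed
  have pow_m: "1 / real s ^ m \<le> (L / real m) ^ m"
  proof -
    have "(real m / L) ^ m \<le> real s ^ m"
      using s_ge \<open>0 < real m / L\<close> by (intro power_mono) auto
    then have "1 / real s ^ m \<le> 1 / (real m / L) ^ m"
      using \<open>0 < real m / L\<close> s_real_pos by (intro divide_left_mono mult_pos_pos zero_less_power) auto
    then show ?thesis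
      by (simp add: power_divide)
  qed
  have "real (stirling (Suc n) (Suc m))
      \<le> fact n * (exp 1 * (real n + real s) / real s) ^ s * (1 / real s ^ m)"
    using stirling_le_fact_mult_binomial_div_power[OF s_pos, of n m] by simp
  also have "\<dots> \<le> fact n * exp 6 ^ m * (L / real m) ^ m"
    using pow_s pow_m by (intro mult_mono mult_left_mono) auto
  also have "\<dots> = fact n * (exp 6 / real m * L) ^ m"
    by (simp add: power_mult_distrib power_divide)
  finally show ?thesis .
qed

lemma stirling_upper_bound_small_log:
  assumes "1 \<le> m" "m \<le> n" "max 1 (ln (real n / real m)) \<le> real m"
  shows "real (stirling (Suc n) (Suc m))
    \<le> fact n * (exp 6 / real m * max 1 (ln (real n / real m))) ^ m"
proof -
  define L where "L = max 1 (ln (real n / real m))"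
  have "0 < real m / L"
    using assms(1) unfolding L_def by simp
  then have s_eq: "real (nat \<lceil>real m / L\<rceil>) = of_int \<lceil>real m / L\<rceil>"
    by simp
  show ?thesis
    unfolding L_def[symmetric]
  proof (rule stirling_upper_bound_of_shift[where s = "nat \<lceil>real m / L\<rceil>"])
    show "real m / L \<le> real (nat \<lceil>real m / L\<rceil>)"
      unfolding s_eq by (rule le_of_int_ceiling)
    show "real (nat \<lceil>real m / L\<rceil>) \<le> real m / L + 1"
      unfolding s_eq using ceiling_correct[of "real m / L"] by linarith
  qed (use assms in \<open>auto simp: L_def\<close>)
qed

lemma stirling_upper_bound_large_log:
  assumes "1 \<le> m" "m \<le> n" and m_le: "real m \<le> max 1 (ln (real n / real m))"
  shows "real (stirling (Suc n) (Suc m))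
    \<le> fact n * (exp 6 / real m * max 1 (ln (real n / real m))) ^ m"
proof -
  define L where "L = max 1 (ln (real n / real m))"
  have L_ge_1: "1 \<le> L" unfolding L_def by simp
  have m_pos: "0 < real m" using assms by simp
  have harm_le: "harm n \<le> 2 * L"
  proof -
    have "harm n \<le> 1 + ln (real n)"
      using euler_mascheroni_sequence_decreasing[of 1 n] assms by (simp add: harm_def)
    also have "ln (real n) = ln (real n / real m) + ln (real m)"
      using assms by (simp add: ln_div)
    also have "ln (real m) \<le> real m - 1"
      using m_pos by (rule ln_le_minus_one)
    finally show ?thesis
      using m_le unfolding L_def by linarith
  qed
  have "exp 1 * harm n \<le> exp 1 * (2 * L)"
    using harm_le by simp
  also have "\<dots> \<le> exp 1 * (exp 5 * L)"
    using exp_ge_add_one_self[of 5] L_ge_1 by (intro mult_left_mono mult_right_mono) auto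
  also have "\<dots> = exp 6 * L"
    by (simp add: mult.assoc[symmetric] flip: exp_add)
  finally have "exp 1 * harm n / real m \<le> exp 6 / real m * L"
    using m_pos by (simp add: divide_right_mono)
  then have "(exp 1 * harm n / real m) ^ m \<le> (exp 6 / real m * L) ^ m"
    by (intro power_mono) (auto intro!: divide_nonneg_nonneg mult_nonneg_nonneg harm_nonneg)
  then have "fact n * (exp 1 * harm n / real m) ^ m \<le> fact n * (exp 6 / real m * L) ^ m"
    by (rule mult_left_mono) simp
  with stirling_le_fact_mult_harm_power[OF assms(1), of n] show ?thesis
    unfolding L_def by (rule order_trans)
qed

lemma stirling_upper_bound:
  assumes "1 \<le> m" "m \<le> n"
  shows "real (stirling (Suc n) (Suc m))
    \<le> fact n * (exp 6 / real m * max 1 (ln (real n / real m))) ^ m"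
  using stirling_upper_bound_small_log[OF assms] stirling_upper_bound_large_log[OF assms]
  by linarith

section \<open>Elementary symmetric functions\<close>

definition esym :: "('a \<Rightarrow> real) \<Rightarrow> 'a set \<Rightarrow> nat \<Rightarrow> real" where
  "esym f A k = (\<Sum>S | S \<subseteq> A \<and> card S = k. \<Prod>x\<in>S. f x)"

lemma esym_0: "finite A \<Longrightarrow> esym f A 0 = 1"
proof -
  assume "finite A"
  then have "{S. S \<subseteq> A \<and> card S = 0} = {{}}"
    using finite_subset by fastforce
  then show ?thesis
    by (simp add: esym_def)
qed

lemma esym_empty_Suc: "esym f {} (Suc k) = 0"
  by (simp add: esym_def)

lemma subsets_insert_card_Suc:
  assumes "finite A" "a \<notin> A"
  shows "{S. S \<subseteq> insert a A \<and> card S = Suc k}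
    = {S. S \<subseteq> A \<and> card S = Suc k} \<union> insert a ` {S. S \<subseteq> A \<and> card S = k}"
proof (intro set_eqI iffI)
  fix S
  assume S: "S \<in> {S. S \<subseteq> insert a A \<and> card S = Suc k}"
  have "finite S"
    using S assms(1) finite_subset by auto
  show "S \<in> {S. S \<subseteq> A \<and> card S = Suc k} \<union> insert a ` {S. S \<subseteq> A \<and> card S = k}"
  proof (cases "a \<in> S")
    case True
    then have "S = insert a (S - {a})" and "S - {a} \<in> {S. S \<subseteq> A \<and> card S = k}"
      using S \<open>finite S\<close> by auto
    then show ?thesis
      by blast
  qed (use S in auto)
next
  fix S
  assume "S \<in> {S. S \<subseteq> A \<and> card S = Suc k} \<union> insert a ` {S. S \<subseteq> A \<and> card S = k}"
  moreover have "card (insert a T) = Suc (card T)" if "T \<subseteq> A" for T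
    using that assms by (meson card_insert_disjoint finite_subset subsetD)
  ultimately show "S \<in> {S. S \<subseteq> insert a A \<and> card S = Suc k}"
    by auto
qed

lemma esym_insert:
  assumes "finite A" "a \<notin> A"
  shows "esym f (insert a A) (Suc k) = esym f A (Suc k) + f a * esym f A k"
proof -
  let ?S = "\<lambda>k. {S. S \<subseteq> A \<and> card S = k}"
  have inj: "inj_on (insert a) (?S k)"
    using assms by (auto simp: inj_on_def)
  have disjoint: "?S (Suc k) \<inter> insert a ` ?S k = {}"
    using assms by auto
  have "esym f (insert a A) (Suc k)
      = esym f A (Suc k) + (\<Sum>S\<in>insert a ` ?S k. \<Prod>x\<in>S. f x)"
    unfolding esym_def subsets_insert_card_Suc[OF assms]
    using assms disjoint by (intro sum.union_disjoint) auto
  also have "(\<Sum>S\<in>insert a ` ?S k. \<Prod>x\<in>S. f x) = (\<Sum>S\<in>?S k. \<Prod>x\<in>insert a S. f x)"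
    by (rule sum.reindex_cong[OF inj refl refl])
  also have "\<dots> = (\<Sum>S\<in>?S k. f a * (\<Prod>x\<in>S. f x))"
    using assms by (intro sum.cong refl prod.insert) (auto dest: finite_subset)
  also have "\<dots> = f a * esym f A k"
    by (simp add: esym_def sum_distrib_left)
  finally show ?thesis .
qed

lemma esym_mono:
  assumes "A \<subseteq> B" "finite B" "\<And>x. x \<in> B \<Longrightarrow> 0 \<le> f x"
  shows "esym f A k \<le> esym f B k"
  unfolding esym_def using assms
  by (intro sum_mono2) (auto intro!: prod_nonneg)

lemma esym_mult_sum_le_esym_Un:
  assumes "finite A" "finite B" "A \<inter> B = {}" "\<And>x. x \<in> A \<union> B \<Longrightarrow> 0 \<le> f x"
  shows "esym f A k * sum f B \<le> esym f (A \<union> B) (Suc k)"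
proof -
  let ?S = "{S. S \<subseteq> A \<and> card S = k}"
  let ?ins = "\<lambda>(S, b). insert b S"
  have inj: "inj_on ?ins (?S \<times> B)"
  proof (rule inj_onI, clarsimp)
    fix S b T c
    assume "S \<subseteq> A" "T \<subseteq> A" "b \<in> B" "c \<in> B" "insert b S = insert c T"
    moreover from this have "b = c"
      using assms(3) by blast
    ultimately show "S = T \<and> b = c"
      using assms(3) by (metis Diff_insert_absorb disjoint_iff subsetD)
  qed
  have fresh: "finite S" "b \<notin> S" if "S \<subseteq> A" "b \<in> B" for S b
    using that assms finite_subset by auto
  have prod_insert: "(\<Prod>x\<in>S. f x) * f b = (\<Prod>x\<in>insert b S. f x)" if "S \<subseteq> A" "b \<in> B" for S b
    using fresh[OF that] by (simp add: mult.commute)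
  have "esym f A k * sum f B = (\<Sum>(S, b)\<in>?S \<times> B. (\<Prod>x\<in>S. f x) * f b)"
    unfolding esym_def sum_product sum.cartesian_product ..
  also have "\<dots> = (\<Sum>(S, b)\<in>?S \<times> B. \<Prod>x\<in>insert b S. f x)"
    using prod_insert by (intro sum.cong refl) auto
  also have "\<dots> = (\<Sum>S\<in>?ins ` (?S \<times> B). \<Prod>x\<in>S. f x)"
    using sum.reindex[OF inj, of "\<lambda>S. \<Prod>x\<in>S. f x"] by (simp add: comp_def case_prod_beta)
  also have "\<dots> \<le> esym f (A \<union> B) (Suc k)"
    unfolding esym_def
  proof (rule sum_mono2)
    show "finite {S. S \<subseteq> A \<union> B \<and> card S = Suc k}"
      using assms by auto
    show "?ins ` (?S \<times> B) \<subseteq> {S. S \<subseteq> A \<union> B \<and> card S = Suc k}"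
      by (auto simp: fresh card_insert_disjoint)
  qed (use assms in \<open>auto intro!: prod_nonneg\<close>)
  finally show ?thesis .
qed

lemma prod_sum_le_esym_UN:
  assumes "\<And>i. i < p \<Longrightarrow> finite (B i)"
    and "\<And>i j. i < p \<Longrightarrow> j < p \<Longrightarrow> i \<noteq> j \<Longrightarrow> B i \<inter> B j = {}"
    and "\<And>x. x \<in> (\<Union>i<p. B i) \<Longrightarrow> 0 \<le> f x"
  shows "(\<Prod>i<p. sum f (B i)) \<le> esym f (\<Union>i<p. B i) p"
  using assms
proof (induction p)
  case 0
  then show ?case by (simp add: esym_0)
next
  case (Suc p)
  have nonneg: "0 \<le> f x" if "x \<in> B i" "i < Suc p" for x i
    using Suc.prems(3) that by blast
  have IH: "(\<Prod>i<p. sum f (B i)) \<le> esym f (\<Union>i<p. B i) p"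
    using Suc.prems(1,2) by (intro Suc.IH) (auto intro: nonneg)
  have "(\<Prod>i<Suc p. sum f (B i)) = (\<Prod>i<p. sum f (B i)) * sum f (B p)"
    by simp
  also have "\<dots> \<le> esym f (\<Union>i<p. B i) p * sum f (B p)"
  proof (rule mult_right_mono[OF IH])
    show "0 \<le> sum f (B p)"
      by (intro sum_nonneg nonneg) auto
  qed
  also have "\<dots> \<le> esym f ((\<Union>i<p. B i) \<union> B p) (Suc p)"
  proof (rule esym_mult_sum_le_esym_Un)
    have "B i \<inter> B p = {}" if "i < p" for i
      using Suc.prems(2)[of i p] that by simp
    then show "(\<Union>i<p. B i) \<inter> B p = {}"
      by blast
  qed (use Suc.prems(1) in \<open>auto intro: nonneg\<close>)
  also have "(\<Union>i<p. B i) \<union> B p = (\<Union>i<Suc p. B i)"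
    by (auto simp: lessThan_Suc)
  finally show ?case .
qed

lemma stirling_eq_fact_mult_esym:
  "real (stirling (Suc n) (Suc k)) = fact n * esym (\<lambda>j. 1 / real j) {1..n} k"
proof (induction n arbitrary: k)
  case 0
  then show ?case by (cases k) (auto simp: esym_0 esym_empty_Suc)
next
  case (Suc n)
  show ?case
  proof (cases k)
    case 0
    then show ?thesis
      by (simp del: stirling.simps add: stirling_Suc_n_1 esym_0 algebra_simps)
  next
    case (Suc k')
    have "real (stirling (Suc (Suc n)) (Suc k))
        = real (Suc n) * real (stirling (Suc n) (Suc k)) + real (stirling (Suc n) k)"
      by (simp only: Suc stirling.simps(4) of_nat_add of_nat_mult)
    also have "\<dots> = fact (Suc n) * (esym (\<lambda>j. 1 / real j) {1..n} k
        + 1 / real (Suc n) * esym (\<lambda>j. 1 / real j) {1..n} k')"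
      by (simp del: stirling.simps add: Suc.IH Suc field_simps)
    also have "\<dots> = fact (Suc n) * esym (\<lambda>j. 1 / real j) {1..Suc n} k"
      using esym_insert[of "{1..n}" "Suc n" "\<lambda>j. 1 / real j" k']
      by (simp add: Suc atLeastAtMostSuc_conv)
    finally show ?thesis .
  qed
qed

section \<open>Lower bound\<close>

lemma harm_div_le_sum_reciprocals_residue_class:
  assumes "i < m"
  shows "harm q / real m \<le> (\<Sum>j<q. 1 / real (i + j * m + 1))"
proof -
  have "harm q / real m = (\<Sum>j<q. 1 / (real m * real (Suc j)))"
    by (simp add: harm_altdef sum_divide_distrib field_simps)
  also have "\<dots> \<le> (\<Sum>j<q. 1 / real (i + j * m + 1))"
  proof (rule sum_mono)
    fix j
    have "real (i + j * m + 1) \<le> real m * real (Suc j)"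
      using assms by (simp add: algebra_simps)
    then show "1 / (real m * real (Suc j)) \<le> 1 / real (i + j * m + 1)"
      by (intro divide_left_mono mult_pos_pos) (use assms in \<open>auto simp: add_pos_nonneg\<close>)
  qed
  finally show ?thesis .
qed

lemma harm_div_power_le_esym_reciprocals:
  assumes "1 \<le> m"
  shows "(harm (n div m) / real m) ^ m \<le> esym (\<lambda>x. 1 / real x) {1..n} m"
proof -
  define q where "q = n div m"
  define B where "B i = (\<lambda>j. i + j * m + 1) ` {..<q}" for i
  have B_subset: "B i \<subseteq> {1..n}" if "i < m" for i
  proof
    fix x
    assume "x \<in> B i"
    then obtain j where "j < q" "x = i + j * m + 1"
      unfolding B_def by auto
    moreover have "Suc j * m \<le> q * m"
      using \<open>j < q\<close> by (intro mult_right_mono) auto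
    moreover have "q * m \<le> n"
      unfolding q_def by (rule div_times_less_eq_dividend)
    ultimately show "x \<in> {1..n}"
      using that by auto
  qed
  have B_residue: "(x - 1) mod m = i" if "x \<in> B i" "i < m" for x i
    using that unfolding B_def by auto
  have B_disjoint: "B i \<inter> B j = {}" if "i < m" "j < m" "i \<noteq> j" for i j
    using B_residue that by blast
  have "(harm q / real m) ^ m = (\<Prod>i<m. harm q / real m)"
    by simp
  also have "\<dots> \<le> (\<Prod>i<m. \<Sum>x\<in>B i. 1 / real x)"
  proof (intro prod_mono conjI)
    fix i
    assume "i \<in> {..<m}"
    have "inj_on (\<lambda>j. i + j * m + 1) {..<q}"
      using assms by (auto simp: inj_on_def)
    then have "(\<Sum>x\<in>B i. 1 / real x) = (\<Sum>j<q. 1 / real (i + j * m + 1))"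
      unfolding B_def by (simp add: sum.reindex)
    then show "harm q / real m \<le> (\<Sum>x\<in>B i. 1 / real x)"
      using harm_div_le_sum_reciprocals_residue_class \<open>i \<in> {..<m}\<close> by simp
  qed (auto intro!: divide_nonneg_nonneg harm_nonneg)
  also have "\<dots> \<le> esym (\<lambda>x. 1 / real x) (\<Union>i<m. B i) m"
    using B_disjoint by (intro prod_sum_le_esym_UN) (auto simp: B_def)
  also have "\<dots> \<le> esym (\<lambda>x. 1 / real x) {1..n} m"
    using B_subset by (intro esym_mono) auto
  finally show ?thesis
    unfolding q_def .
qed

lemma stirling_lower_bound:
  assumes "1 \<le> m" "m \<le> n"
  shows "fact n * (1 / real m * max 1 (ln (real n / real m))) ^ m
    \<le> real (stirling (Suc n) (Suc m))"
proof -
  define q where "q = n div m"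
  have "1 \<le> q"
    using assms div_le_mono[of m n m] unfolding q_def by simp
  then have "1 \<le> (harm q :: real)"
    using harm_mono[of 1 q] by (simp add: harm_def)
  have "real n \<le> (real q + 1) * real m"
  proof -
    have "n = q * m + n mod m"
      unfolding q_def by simp
    moreover have "n mod m < m"
      using assms by simp
    ultimately have "n \<le> (q + 1) * m"
      by (simp only: distrib_right mult_1)
    then have "real n \<le> real ((q + 1) * m)"
      by (simp only: of_nat_le_iff)
    then show ?thesis
      by (simp add: algebra_simps)
  qed
  then have "ln (real n / real m) \<le> ln (real q + 1)"
    using assms by (intro ln_mono) (auto simp: divide_le_eq)
  also have "\<dots> \<le> harm q"
    by (rule harm_ge_ln)
  finally have "max 1 (ln (real n / real m)) \<le> harm q"
    using \<open>1 \<le> harm q\<close> by simp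
  then have "fact n * (1 / real m * max 1 (ln (real n / real m))) ^ m \<le> fact n * (harm q / real m) ^ m"
    using assms by (intro mult_left_mono power_mono) (auto simp: divide_right_mono)
  also have "\<dots> \<le> fact n * esym (\<lambda>x. 1 / real x) {1..n} m"
    unfolding q_def using assms(1) by (intro mult_left_mono harm_div_power_le_esym_reciprocals) auto
  also have "\<dots> = real (stirling (Suc n) (Suc m))"
    by (rule stirling_eq_fact_mult_esym[symmetric])
  finally show ?thesis .
qed

theorem lemma4:
  shows "\<exists>c C :: real. 0 < c \<and> c \<le> C \<and>
    (\<forall>m n :: nat. 1 \<le> m \<and> m \<le> n \<longrightarrow>
      fact n * ((c / real m) * max 1 (ln (real n / real m))) ^ m
        \<le> real (stirling (n + 1) (m + 1)) \<and>
      real (stirling (n + 1) (m + 1))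
        \<le> fact n * ((C / real m) * max 1 (ln (real n / real m))) ^ m)"
proof (intro exI conjI allI impI)
  show "(0::real) < 1" and "(1::real) \<le> exp 6"
    by auto
  fix m n :: nat
  assume "1 \<le> m \<and> m \<le> n"
  then show "fact n * ((1 / real m) * max 1 (ln (real n / real m))) ^ m \<le> real (stirling (n + 1) (m + 1))"
    and "real (stirling (n + 1) (m + 1)) \<le> fact n * ((exp 6 / real m) * max 1 (ln (real n / real m))) ^ m"
    using stirling_lower_bound stirling_upper_bound by simp_all
qed

end
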